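(* Let $H\subseteq G$ be non-abelian simple groups such that the inclusion $H\subseteq G$ is a localization. Assume $G$ and $\mathrm{Aut}(G)$ are co-hopfian, $\mathrm{Aut}(H)$ is complete, and $\mathrm{Out}(G)$ is hyperabelian. Let $j\colon\mathrm{Aut}(H)\to\mathrm{Aut}(G)$ be an injective homomorphism with $j(c_h)=c_h^G$ for all $h\in H$. Let $N=j^{-1}(\mathrm{Inn}(G))$, let $k\colon\mathrm{Out}(H)\to\mathrm{Out}(G)$ be induced by $j$, and let $\pi\colon\mathrm{Out}(H)\to\mathrm{Aut}(H)/N$ be the canonical projection. Consider the conditions: (b) the only $\theta\in\mathrm{Aut}(\mathrm{Aut}(G))$ with $\theta\circ j=j$ is the identity; (c) for every homomorphism $\varphi'\colon\mathrm{Aut}(H)/N\to\mathrm{Aut}(G)$ there exists a unique homomorphism $\psi'\colon\mathrm{Out}(G)\to\mathrm{Aut}(G)$ with $\psi'\circ k=\varphi'\circ\pi$; (d) every homomorphism $\varphi\colon\mathrm{Aut}(H)\to\mathrm{Aut}(G)$ with $\mathrm{Inn}(H)\subseteq\ker\varphi$ satisfies $N\subseteq\ker\varphi$. Then $j$ is a localization if and only if (b), (c) and (d) hold. If in addition $\mathrm{Aut}(G)$ is complete, then $j$ is a localization if and only if (c) and (d) hold.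
   Context: A group homomorphism $i\colon X\to Y$ is a localization if for every homomorphism $\varphi\colon X\to Y$ there exists a unique homomorphism $\psi\colon Y\to Y$ with $\psi\circ i=\varphi$; for $H\subseteq G$, "$H\subseteq G$ is a localization" means the inclusion map is. A group is co-hopfian if every injective endomorphism is an automorphism; complete if it has trivial center and every automorphism is inner. A group $A$ is hyperabelian if every non-trivial quotient of $A$ has a non-trivial abelian normal subgroup. For $h\in H\subseteq G$, $c_h$ is conjugation by $h$ on $H$ and $c_h^G$ is conjugation by $h$ on $G$. $\mathrm{Out}(X)=\mathrm{Aut}(X)/\mathrm{Inn}(X)$. *)

theory Defs
  imports "HOL-Algebra.Algebra"
begin

definition group_conj :: "('a, 'b) monoid_scheme \<Rightarrow> 'a \<Rightarrow> ('a \<Rightarrow> 'a)" where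
  "group_conj G g = (\<lambda>x \<in> carrier G. g \<otimes>\<^bsub>G\<^esub> x \<otimes>\<^bsub>G\<^esub> inv\<^bsub>G\<^esub> g)"

definition Inn :: "('a, 'b) monoid_scheme \<Rightarrow> ('a \<Rightarrow> 'a) set" where
  "Inn G = group_conj G ` carrier G"

definition Out :: "('a, 'b) monoid_scheme \<Rightarrow> ('a \<Rightarrow> 'a) set monoid" where
  "Out G = AutoGroup G Mod Inn G"

definition unique_factorization ::
  "('a, 'm) monoid_scheme \<Rightarrow> ('b, 'n) monoid_scheme \<Rightarrow> ('c, 'o) monoid_scheme
   \<Rightarrow> ('a \<Rightarrow> 'b) \<Rightarrow> ('a \<Rightarrow> 'c) \<Rightarrow> bool" where
  "unique_factorization XX YY ZZ i phi \<longleftrightarrow>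
     (\<exists>psi \<in> hom YY ZZ. (\<forall>x \<in> carrier XX. psi (i x) = phi x) \<and>
        (\<forall>psi' \<in> hom YY ZZ. (\<forall>x \<in> carrier XX. psi' (i x) = phi x) \<longrightarrow>
            (\<forall>y \<in> carrier YY. psi' y = psi y)))"

definition localization :: "('a, 'm) monoid_scheme \<Rightarrow> ('b, 'n) monoid_scheme \<Rightarrow> ('a \<Rightarrow> 'b) \<Rightarrow> bool" where
  "localization XX YY i \<longleftrightarrow> i \<in> hom XX YY \<and> (\<forall>phi \<in> hom XX YY. unique_factorization XX YY YY i phi)"

definition cohopfian :: "('a, 'm) monoid_scheme \<Rightarrow> bool" where
  "cohopfian G \<longleftrightarrow> (\<forall>f \<in> hom G G. inj_on f (carrier G) \<longrightarrow> f ` carrier G = carrier G)"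

definition group_center :: "('a, 'm) monoid_scheme \<Rightarrow> 'a set" where
  "group_center G = {z \<in> carrier G. \<forall>x \<in> carrier G. z \<otimes>\<^bsub>G\<^esub> x = x \<otimes>\<^bsub>G\<^esub> z}"

definition complete_group :: "('a, 'm) monoid_scheme \<Rightarrow> bool" where
  "complete_group G \<longleftrightarrow> group G \<and> group_center G = {\<one>\<^bsub>G\<^esub>} \<and> carrier (AutoGroup G) \<subseteq> Inn G"

definition simple_grp :: "('a, 'm) monoid_scheme \<Rightarrow> bool" where
  "simple_grp G \<longleftrightarrow> group G \<and> carrier G \<noteq> {\<one>\<^bsub>G\<^esub>} \<and>
     (\<forall>N. N \<lhd> G \<longrightarrow> N = carrier G \<or> N = {\<one>\<^bsub>G\<^esub>})"

definition nonabelian :: "('a, 'm) monoid_scheme \<Rightarrow> bool" where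
  "nonabelian G \<longleftrightarrow> (\<exists>x \<in> carrier G. \<exists>y \<in> carrier G. x \<otimes>\<^bsub>G\<^esub> y \<noteq> y \<otimes>\<^bsub>G\<^esub> x)"

definition hyperabelian :: "('a, 'm) monoid_scheme \<Rightarrow> bool" where
  "hyperabelian A \<longleftrightarrow> group A \<and>
     (\<forall>N. N \<lhd> A \<longrightarrow> N \<noteq> carrier A \<longrightarrow>
        (\<exists>M. M \<lhd> (A Mod N) \<and> M \<noteq> {\<one>\<^bsub>A Mod N\<^esub>} \<and>
             (\<forall>x \<in> M. \<forall>y \<in> M. x \<otimes>\<^bsub>A Mod N\<^esub> y = y \<otimes>\<^bsub>A Mod N\<^esub> x)))"

end

theory Submission
  imports Defs
begin

text \<open>
  Since G is simple and non-abelian, conjugation embeds G into Aut G, and a homomorphism out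
  of Aut G that kills one non-trivial inner automorphism kills all of Inn G. Given
  \<open>\<phi> : Aut H \<rightarrow> Aut G\<close>, either \<open>\<phi>\<close> kills Inn H, or it does not.
  In the first case (d) lets \<open>\<phi>\<close> factor through Aut H / N, and (c) yields the extension
  along j through Out G; any extension kills the conjugations by H, hence Inn G, so it is
  unique. In the second case, as a hyperabelian group has no non-abelian simple subgroup,
  \<open>\<phi>\<close> maps Inn H into Inn G; the induced homomorphism H \<rightarrow> G extends, by the
  localization H \<subseteq> G, to an injective and hence (G co-hopfian) bijective endomorphism t
  of G, and \<open>\<phi> = c\<^sub>t \<circ> j\<close>. Another extension \<open>\<sigma>\<close> gives
  \<open>c\<^sub>t\<^sup>-\<^sup>1 \<circ> \<sigma>\<close>, which fixes j and is injective, hence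
  (Aut G co-hopfian) an automorphism of Aut G, which (b) forces to be the identity.
  Conversely, the same factorizations read backwards give (b), (c), (d) from the localization
  property of j, and if Aut G is complete, (b) follows from the localization H \<subseteq> G.
\<close>

context group
begin

lemma AutoGroup_carrier: "carrier (AutoGroup G) = auto G"
  by (simp add: AutoGroup_def)

lemma AutoGroup_memD:
  assumes "a \<in> carrier (AutoGroup G)"
  shows "a \<in> hom G G" "a \<in> extensional (carrier G)" "bij_betw a (carrier G) (carrier G)"
  using assms by (auto simp: AutoGroup_def auto_def Bij_def)

lemma AutoGroup_mult_apply:
  assumes "a \<in> carrier (AutoGroup G)" "b \<in> carrier (AutoGroup G)" "x \<in> carrier G"
  shows "(a \<otimes>\<^bsub>AutoGroup G\<^esub> b) x = a (b x)"
  using assms by (auto simp: AutoGroup_def BijGroup_def auto_def compose_def)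

lemma AutoGroup_one: "\<one>\<^bsub>AutoGroup G\<^esub> = (\<lambda>x\<in>carrier G. x)"
  by (simp add: AutoGroup_def BijGroup_def)

lemma AutoGroup_eqI:
  assumes "a \<in> carrier (AutoGroup G)" "b \<in> carrier (AutoGroup G)"
    and "\<And>x. x \<in> carrier G \<Longrightarrow> a x = b x"
  shows "a = b"
  using AutoGroup_memD(2)[OF assms(1)] AutoGroup_memD(2)[OF assms(2)] assms(3)
  by (rule extensionalityI)

lemma AutoGroup_eq_oneI:
  assumes "a \<in> carrier (AutoGroup G)" and "\<And>x. x \<in> carrier G \<Longrightarrow> a x = x"
  shows "a = \<one>\<^bsub>AutoGroup G\<^esub>"
  using assms by (intro AutoGroup_eqI) (simp_all add: AutoGroup_one AutoGroup_carrier id_in_auto)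

lemma AutoGroup_apply_closed:
  assumes "a \<in> carrier (AutoGroup G)" "x \<in> carrier G"
  shows "a x \<in> carrier G"
  using AutoGroup_memD(1)[OF assms(1)] assms(2) by (rule hom_in_carrier)

lemma AutoGroup_apply_inv:
  assumes a: "a \<in> carrier (AutoGroup G)" and x: "x \<in> carrier G"
  shows "a ((inv\<^bsub>AutoGroup G\<^esub> a) x) = x"
proof -
  interpret A: group "AutoGroup G" by (rule AutoGroup)
  have "a ((inv\<^bsub>AutoGroup G\<^esub> a) x) = (a \<otimes>\<^bsub>AutoGroup G\<^esub> inv\<^bsub>AutoGroup G\<^esub> a) x"
    using AutoGroup_mult_apply[OF a A.inv_closed[OF a] x] ..
  then show ?thesis using a x by (simp add: AutoGroup_one)
qed

lemma group_conj_apply: "x \<in> carrier G \<Longrightarrow> group_conj G g x = g \<otimes> x \<otimes> inv g"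
  by (simp add: group_conj_def)

lemma group_conj_inv_cancel:
  assumes "g \<in> carrier G" "x \<in> carrier G"
  shows "group_conj G (inv g) (group_conj G g x) = x" "group_conj G g (group_conj G (inv g) x) = x"
  using assms by (auto simp: group_conj_def m_assoc[symmetric], simp_all add: m_assoc)

lemma group_conj_in_AutoGroup:
  assumes g: "g \<in> carrier G"
  shows "group_conj G g \<in> carrier (AutoGroup G)"
proof -
  have "group_conj G g \<in> hom G G"
    by (rule homI) (use g in \<open>auto simp: group_conj_def m_assoc inv_solve_left\<close>)
  moreover have "bij_betw (group_conj G g) (carrier G) (carrier G)"
    by (rule bij_betw_byWitness[where f' = "group_conj G (inv g)"])
      (use g group_conj_inv_cancel in \<open>auto simp: group_conj_def\<close>)
  ultimately show ?thesis
    by (simp add: AutoGroup_carrier auto_def Bij_def group_conj_def)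
qed

lemma group_conj_hom: "group_conj G \<in> hom G (AutoGroup G)"
proof (rule homI)
  interpret A: group "AutoGroup G" by (rule AutoGroup)
  fix x y assume xy: "x \<in> carrier G" "y \<in> carrier G"
  then show "group_conj G (x \<otimes> y) = group_conj G x \<otimes>\<^bsub>AutoGroup G\<^esub> group_conj G y"
    by (intro AutoGroup_eqI)
      (simp_all add: group_conj_in_AutoGroup AutoGroup_mult_apply group_conj_apply inv_mult_group m_assoc)
qed (rule group_conj_in_AutoGroup)

lemma group_conj_one: "group_conj G \<one> = \<one>\<^bsub>AutoGroup G\<^esub>"
  by (auto simp: group_conj_def AutoGroup_one)

lemma AutoGroup_conj_group_conj:
  assumes a: "a \<in> carrier (AutoGroup G)" and u: "u \<in> carrier G"
  shows "a \<otimes>\<^bsub>AutoGroup G\<^esub> group_conj G u \<otimes>\<^bsub>AutoGroup G\<^esub> inv\<^bsub>AutoGroup G\<^esub> a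
       = group_conj G (a u)"
proof -
  interpret A: group "AutoGroup G" by (rule AutoGroup)
  interpret a: group_hom G G a
    using AutoGroup_memD(1)[OF a] by (simp add: group_hom_def group_hom_axioms_def is_group)
  have ia: "inv\<^bsub>AutoGroup G\<^esub> a \<in> carrier (AutoGroup G)" using a by simp
  show ?thesis
  proof (rule AutoGroup_eqI)
    fix x assume x: "x \<in> carrier G"
    have iax: "(inv\<^bsub>AutoGroup G\<^esub> a) x \<in> carrier G" using ia x by (rule AutoGroup_apply_closed)
    have "(a \<otimes>\<^bsub>AutoGroup G\<^esub> group_conj G u \<otimes>\<^bsub>AutoGroup G\<^esub> inv\<^bsub>AutoGroup G\<^esub> a) x
        = a (u \<otimes> (inv\<^bsub>AutoGroup G\<^esub> a) x \<otimes> inv u)"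
      using a u ia x iax by (simp add: AutoGroup_mult_apply group_conj_in_AutoGroup group_conj_apply)
    also have "\<dots> = a u \<otimes> x \<otimes> inv (a u)"
      using u iax AutoGroup_apply_inv[OF a x] by simp
    finally show "(a \<otimes>\<^bsub>AutoGroup G\<^esub> group_conj G u \<otimes>\<^bsub>AutoGroup G\<^esub> inv\<^bsub>AutoGroup G\<^esub> a) x
        = group_conj G (a u) x"
      using x by (simp add: group_conj_apply)
  qed (use a u ia in \<open>simp_all add: group_conj_in_AutoGroup AutoGroup_apply_closed\<close>)
qed

lemma Inn_normal: "Inn G \<lhd> AutoGroup G"
proof -
  interpret A: group "AutoGroup G" by (rule AutoGroup)
  interpret c: group_hom G "AutoGroup G" "group_conj G"
    by (simp add: group_hom_def group_hom_axioms_def group_conj_hom is_group A.is_group)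
  show ?thesis
    unfolding Inn_def
    using c.img_is_subgroup AutoGroup_conj_group_conj AutoGroup_apply_closed
    by (auto intro!: A.normal_invI)
qed

lemma simple_hom_trivial_or_inj:
  assumes "simple_grp G" "group K" "f \<in> hom G K"
  shows "(\<forall>x \<in> carrier G. f x = \<one>\<^bsub>K\<^esub>) \<or> inj_on f (carrier G)"
proof -
  interpret f: group_hom G K f
    using assms by (simp add: group_hom_def group_hom_axioms_def is_group)
  have "kernel G K f = carrier G \<or> kernel G K f = {\<one>}"
    using assms(1) f.normal_kernel by (simp add: simple_grp_def)
  then show ?thesis
    using f.inj_iff_trivial_ker by (auto simp: kernel_def)
qed

lemma group_conj_inj:
  assumes "simple_grp G" "nonabelian G"
  shows "inj_on (group_conj G) (carrier G)"
proof -
  have "\<not> (\<forall>x \<in> carrier G. group_conj G x = \<one>\<^bsub>AutoGroup G\<^esub>)"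
  proof
    assume triv: "\<forall>x \<in> carrier G. group_conj G x = \<one>\<^bsub>AutoGroup G\<^esub>"
    obtain x y where xy: "x \<in> carrier G" "y \<in> carrier G" "x \<otimes> y \<noteq> y \<otimes> x"
      using assms(2) by (auto simp: nonabelian_def)
    have "group_conj G x y = y" using triv xy by (simp add: AutoGroup_one)
    then have "x \<otimes> y \<otimes> inv x = y" using xy by (simp add: group_conj_apply)
    then have "x \<otimes> y \<otimes> inv x \<otimes> x = y \<otimes> x" by simp
    then show False using xy by (simp add: m_assoc)
  qed
  then show ?thesis
    using simple_hom_trivial_or_inj[OF assms(1) AutoGroup group_conj_hom] by blast
qed

lemma AutoGroup_hom_kills_Inn:
  assumes "simple_grp G" "group K" and psi: "psi \<in> hom (AutoGroup G) K"
    and h0: "h0 \<in> carrier G" "h0 \<noteq> \<one>" "psi (group_conj G h0) = \<one>\<^bsub>K\<^esub>"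
    and u: "u \<in> carrier G"
  shows "psi (group_conj G u) = \<one>\<^bsub>K\<^esub>"
proof -
  interpret A: group "AutoGroup G" by (rule AutoGroup)
  interpret psi: group_hom "AutoGroup G" K psi
    using assms by (simp add: group_hom_def group_hom_axioms_def A.is_group)
  have "psi \<circ> group_conj G \<in> hom G K" using group_conj_hom psi by (rule Group.hom_compose)
  moreover have "psi (group_conj G \<one>) = \<one>\<^bsub>K\<^esub>" by (simp add: group_conj_one)
  then have "\<not> inj_on (psi \<circ> group_conj G) (carrier G)"
    using h0 unfolding inj_on_def by (metis comp_apply one_closed)
  ultimately show ?thesis
    using simple_hom_trivial_or_inj[OF assms(1,2)] u by fastforce
qed

lemma AutoGroup_hom_inj_if_inj_on_Inn:
  assumes "group K" and psi: "psi \<in> hom (AutoGroup G) K"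
    and inj: "inj_on (psi \<circ> group_conj G) (carrier G)"
  shows "inj_on psi (carrier (AutoGroup G))"
proof -
  interpret A: group "AutoGroup G" by (rule AutoGroup)
  interpret psi: group_hom "AutoGroup G" K psi
    using assms by (simp add: group_hom_def group_hom_axioms_def A.is_group)
  have "k = \<one>\<^bsub>AutoGroup G\<^esub>" if k: "k \<in> carrier (AutoGroup G)" "psi k = \<one>\<^bsub>K\<^esub>" for k
  proof (rule AutoGroup_eq_oneI[OF k(1)])
    fix u assume u: "u \<in> carrier G"
    have "psi (group_conj G (k u))
        = psi (k \<otimes>\<^bsub>AutoGroup G\<^esub> group_conj G u \<otimes>\<^bsub>AutoGroup G\<^esub> inv\<^bsub>AutoGroup G\<^esub> k)"
      using AutoGroup_conj_group_conj[OF k(1) u] by simp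
    also have "\<dots> = psi (group_conj G u)"
      using k u by (simp add: group_conj_in_AutoGroup)
    finally show "k u = u"
      using inj u AutoGroup_apply_closed[OF k(1) u] by (auto simp: inj_on_def)
  qed
  then show ?thesis
    by (auto simp: psi.inj_iff_trivial_ker kernel_def)
qed

end

lemma localization_extends:
  assumes "localization L Y i" "phi \<in> hom L Y"
  obtains psi where "psi \<in> hom Y Y" "\<And>x. x \<in> carrier L \<Longrightarrow> psi (i x) = phi x"
  using assms unfolding localization_def unique_factorization_def by blast

lemma localization_hom_eqI:
  assumes loc: "localization L Y i" and psi: "psi1 \<in> hom Y Y" "psi2 \<in> hom Y Y"
    and eq: "\<And>x. x \<in> carrier L \<Longrightarrow> psi1 (i x) = psi2 (i x)" and y: "y \<in> carrier Y"
  shows "psi1 y = psi2 y"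
proof -
  have "i \<in> hom L Y" using loc by (simp add: localization_def)
  then have "psi1 \<circ> i \<in> hom L Y" using psi(1) by (rule Group.hom_compose)
  then obtain psi where uniq: "\<forall>psi' \<in> hom Y Y. (\<forall>x \<in> carrier L. psi' (i x) = (psi1 \<circ> i) x) \<longrightarrow>
      (\<forall>y \<in> carrier Y. psi' y = psi y)"
    using loc unfolding localization_def unique_factorization_def by blast
  have "psi1 y = psi y" using uniq psi(1) y by simp
  moreover have "psi2 y = psi y" using uniq psi(2) y eq by simp
  ultimately show ?thesis by simp
qed

lemma (in group) localization_AutoGroup_eq_one:
  assumes loc: "localization L G i" and a: "a \<in> carrier (AutoGroup G)"
    and a_fixes: "\<And>x. x \<in> carrier L \<Longrightarrow> a (i x) = i x"
  shows "a = \<one>\<^bsub>AutoGroup G\<^esub>"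
proof (rule AutoGroup_eq_oneI[OF a])
  have "(\<lambda>x\<in>carrier G. x) \<in> hom G G" by (rule homI) auto
  moreover have "i x \<in> carrier G" if "x \<in> carrier L" for x
    using loc that by (auto simp: localization_def hom_in_carrier)
  ultimately show "a y = y" if "y \<in> carrier G" for y
    using localization_hom_eqI[OF loc AutoGroup_memD(1)[OF a]] a_fixes that by auto
qed

lemma (in group) cohopfian_inj_hom_in_AutoGroup:
  assumes "cohopfian G" "f \<in> hom G G" "inj_on f (carrier G)"
  shows "restrict f (carrier G) \<in> carrier (AutoGroup G)"
proof -
  have "restrict f (carrier G) \<in> hom G G" using hom_restrict[OF assms(2)] by simp
  moreover have "bij_betw (restrict f (carrier G)) (carrier G) (carrier G)"
    using assms by (simp add: cohopfian_def bij_betw_def)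
  ultimately show ?thesis by (simp add: AutoGroup_carrier auto_def Bij_def)
qed

lemma hom_preimage_normal:
  assumes A: "group A" and B: "group B" and f: "f \<in> hom A B" and M: "M \<lhd> B"
  shows "{x \<in> carrier A. f x \<in> M} \<lhd> A"
proof -
  interpret B: group B by (rule B)
  interpret M: normal M B by (rule M)
  have "(\<lambda>x. M #>\<^bsub>B\<^esub> f x) \<in> hom A (B Mod M)"
    using f M.r_coset_hom_Mod by (rule Group.hom_compose[unfolded comp_def])
  then interpret q: group_hom A "B Mod M" "\<lambda>x. M #>\<^bsub>B\<^esub> f x"
    by (simp add: group_hom_def group_hom_axioms_def A M.factorgroup_is_group)
  have "M #>\<^bsub>B\<^esub> f x = M \<longleftrightarrow> f x \<in> M" if "x \<in> carrier A" for x
    using B.coset_join1[OF _ _ M.subgroup_axioms] B.coset_join2[OF _ M.subgroup_axioms]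
      hom_in_carrier[OF f that] by blast
  then have "kernel A (B Mod M) (\<lambda>x. M #>\<^bsub>B\<^esub> f x) = {x \<in> carrier A. f x \<in> M}"
    unfolding kernel_def by auto
  then show ?thesis using q.normal_kernel by simp
qed

lemma FactGroup_lift:
  assumes A: "group A" and B: "group B" and K: "K \<lhd> A" and f: "f \<in> hom A B"
    and kill: "\<And>k. k \<in> K \<Longrightarrow> f k = \<one>\<^bsub>B\<^esub>"
  shows "(\<lambda>C. the_elem (f ` C)) \<in> hom (A Mod K) B"
    and "\<And>a. a \<in> carrier A \<Longrightarrow> the_elem (f ` (K #>\<^bsub>A\<^esub> a)) = f a"
proof -
  interpret A: group A by (rule A)
  interpret K: normal K A by (rule K)
  interpret f: group_hom A B f by (simp add: group_hom_def group_hom_axioms_def A B f)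
  have "f ` (K #>\<^bsub>A\<^esub> a) = {f a}" if a: "a \<in> carrier A" for a
    using a kill A.rcos_self[OF a K.subgroup_axioms]
    by (auto simp: r_coset_def K.subset[THEN subsetD])
  then show ev: "the_elem (f ` (K #>\<^bsub>A\<^esub> a)) = f a" if "a \<in> carrier A" for a
    using that by simp
  show "(\<lambda>C. the_elem (f ` C)) \<in> hom (A Mod K) B"
  proof (rule homI)
    fix C D assume "C \<in> carrier (A Mod K)" "D \<in> carrier (A Mod K)"
    then obtain a b where "a \<in> carrier A" "C = K #>\<^bsub>A\<^esub> a" "b \<in> carrier A" "D = K #>\<^bsub>A\<^esub> b"
      by (auto simp: carrier_FactGroup)
    then show "the_elem (f ` (C \<otimes>\<^bsub>A Mod K\<^esub> D)) = the_elem (f ` C) \<otimes>\<^bsub>B\<^esub> the_elem (f ` D)"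
      using ev by (simp add: K.rcos_sum)
  next
    fix C assume "C \<in> carrier (A Mod K)"
    then show "the_elem (f ` C) \<in> carrier B"
      using ev by (auto simp: carrier_FactGroup RCOSETS_def)
  qed
qed

lemma set_mult_rcos_absorb:
  assumes A: "group A" and K: "subgroup K A" and S: "S \<subseteq> K" "\<one>\<^bsub>A\<^esub> \<in> S"
    and x: "x \<in> carrier A"
  shows "K <#>\<^bsub>A\<^esub> (S #>\<^bsub>A\<^esub> x) = K #>\<^bsub>A\<^esub> x"
proof -
  interpret A: group A by (rule A)
  have Kc: "K \<subseteq> carrier A" using K by (rule subgroup.subset)
  have "K <#>\<^bsub>A\<^esub> S = K"
  proof
    show "K <#>\<^bsub>A\<^esub> S \<subseteq> K"
      using S subgroup.m_closed[OF K] by (auto simp: set_mult_def)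
    show "K \<subseteq> K <#>\<^bsub>A\<^esub> S"
    proof
      fix k assume "k \<in> K"
      moreover have "k = k \<otimes>\<^bsub>A\<^esub> \<one>\<^bsub>A\<^esub>" using \<open>k \<in> K\<close> Kc by auto
      ultimately show "k \<in> K <#>\<^bsub>A\<^esub> S" using S(2) unfolding set_mult_def by blast
    qed
  qed
  moreover have "K <#>\<^bsub>A\<^esub> (S #>\<^bsub>A\<^esub> x) = (K <#>\<^bsub>A\<^esub> S) #>\<^bsub>A\<^esub> x"
    using Kc S x by (intro A.setmult_rcos_assoc) auto
  ultimately show ?thesis by simp
qed

lemma hom_inv_into_lift:
  assumes S: "group S" and G: "group G" and B: "group B"
    and c: "c \<in> hom G B" "inj_on c (carrier G)"
    and chi: "chi \<in> hom S B" "chi ` carrier S \<subseteq> c ` carrier G"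
  shows "(\<lambda>x. inv_into (carrier G) c (chi x)) \<in> hom S G"
proof -
  interpret c: group_hom G B c by (simp add: group_hom_def group_hom_axioms_def G B c)
  have lift: "inv_into (carrier G) c (chi x) \<in> carrier G"
    "c (inv_into (carrier G) c (chi x)) = chi x" if "x \<in> carrier S" for x
  proof -
    have "chi x \<in> c ` carrier G" using chi(2) that by blast
    then show "inv_into (carrier G) c (chi x) \<in> carrier G" "c (inv_into (carrier G) c (chi x)) = chi x"
      by (rule inv_into_into, rule f_inv_into_f)
  qed
  show ?thesis
  proof (rule homI)
    fix x y assume xy: "x \<in> carrier S" "y \<in> carrier S"
    have xy_closed: "x \<otimes>\<^bsub>S\<^esub> y \<in> carrier S"
      using xy by (simp add: monoid.m_closed[OF group.is_monoid[OF S]])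
    have "c (inv_into (carrier G) c (chi (x \<otimes>\<^bsub>S\<^esub> y))) = chi x \<otimes>\<^bsub>B\<^esub> chi y"
      using lift(2)[OF xy_closed] hom_mult[OF chi(1) xy] by simp
    also have "\<dots> = c (inv_into (carrier G) c (chi x) \<otimes>\<^bsub>G\<^esub> inv_into (carrier G) c (chi y))"
      using lift xy by simp
    finally have "c (inv_into (carrier G) c (chi (x \<otimes>\<^bsub>S\<^esub> y)))
        = c (inv_into (carrier G) c (chi x) \<otimes>\<^bsub>G\<^esub> inv_into (carrier G) c (chi y))" .
    moreover have "inv_into (carrier G) c (chi x) \<otimes>\<^bsub>G\<^esub> inv_into (carrier G) c (chi y) \<in> carrier G"
      using lift(1) xy by (simp add: monoid.m_closed[OF group.is_monoid[OF G]])
    ultimately show "inv_into (carrier G) c (chi (x \<otimes>\<^bsub>S\<^esub> y))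
        = inv_into (carrier G) c (chi x) \<otimes>\<^bsub>G\<^esub> inv_into (carrier G) c (chi y)"
      by (rule inj_onD[OF c(2) _ lift(1)[OF xy_closed]])
  qed (rule lift)
qed

lemma (in group) normal_Union_chain:
  assumes ne: "CC \<noteq> {}" and nor: "\<And>M. M \<in> CC \<Longrightarrow> M \<lhd> G"
    and ch: "\<And>M1 M2. M1 \<in> CC \<Longrightarrow> M2 \<in> CC \<Longrightarrow> M1 \<subseteq> M2 \<or> M2 \<subseteq> M1"
  shows "\<Union>CC \<lhd> G"
proof (rule normal_invI)
  have sub: "subgroup M G" if "M \<in> CC" for M using nor[OF that] by (rule normal_imp_subgroup)
  show "subgroup (\<Union>CC) G"
  proof
    show "\<Union>CC \<subseteq> carrier G" using sub subgroup.subset by blast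
    obtain M where "M \<in> CC" using ne by blast
    then show "\<one> \<in> \<Union>CC" using subgroup.one_closed[OF sub] by blast
  next
    fix x assume "x \<in> \<Union>CC"
    then obtain M where "M \<in> CC" "x \<in> M" by blast
    then show "inv x \<in> \<Union>CC" using subgroup.m_inv_closed[OF sub] by blast
  next
    fix x y assume "x \<in> \<Union>CC" "y \<in> \<Union>CC"
    then obtain M1 M2 where M: "M1 \<in> CC" "M2 \<in> CC" "x \<in> M1" "y \<in> M2" by blast
    then consider "x \<in> M2" | "y \<in> M1" using ch by blast
    then show "x \<otimes> y \<in> \<Union>CC"
      by cases (use M subgroup.m_closed[OF sub] in blast)+
  qed
next
  fix x h assume "x \<in> carrier G" "h \<in> \<Union>CC"
  then obtain M where "M \<in> CC" "h \<in> M" by blast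
  then show "x \<otimes> h \<otimes> inv x \<in> \<Union>CC"
    using normal.inv_op_closed2[OF nor \<open>x \<in> carrier G\<close>] by blast
qed

lemma (in group) maximal_normal_avoiding:
  assumes "\<one> \<in> T"
  obtains N where "N \<lhd> G" "N \<inter> T = {\<one>}"
    "\<And>Z. Z \<lhd> G \<Longrightarrow> Z \<inter> T = {\<one>} \<Longrightarrow> N \<subseteq> Z \<Longrightarrow> Z = N"
proof -
  define F where "F = {M. M \<lhd> G \<and> M \<inter> T = {\<one>}}"
  have "{\<one>} \<in> F" using one_is_normal assms by (auto simp: F_def)
  moreover have "\<Union>CC \<in> F" if "CC \<noteq> {}" "subset.chain F CC" for CC
  proof -
    have "\<Union>CC \<lhd> G"
      using that by (intro normal_Union_chain) (auto simp: subset_chain_def F_def)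
    moreover have "\<Union>CC \<inter> T = {\<one>}"
      using that by (auto simp: subset_chain_def F_def)
    ultimately show ?thesis by (simp add: F_def)
  qed
  ultimately obtain N where "N \<in> F" "\<And>Z. Z \<in> F \<Longrightarrow> N \<subseteq> Z \<Longrightarrow> Z = N"
    using subset_Zorn_nonempty[of F] by blast
  then show ?thesis using that by (auto simp: F_def)
qed

lemma hyperabelian_abelian_layer:
  assumes hyp: "hyperabelian A" and N: "N \<lhd> A" "N \<noteq> carrier A"
  obtains M where "M \<lhd> A" "N \<subset> M"
    "\<And>x y. x \<in> M \<Longrightarrow> y \<in> M \<Longrightarrow> x \<otimes>\<^bsub>A\<^esub> y \<otimes>\<^bsub>A\<^esub> inv\<^bsub>A\<^esub> (y \<otimes>\<^bsub>A\<^esub> x) \<in> N"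
proof -
  interpret A: group A using hyp by (simp add: hyperabelian_def)
  interpret N: normal N A by (rule N(1))
  interpret Q: group "A Mod N" by (rule N.factorgroup_is_group)
  obtain Mq where Mq: "Mq \<lhd> A Mod N" "Mq \<noteq> {\<one>\<^bsub>A Mod N\<^esub>}"
    and comm: "\<forall>C \<in> Mq. \<forall>D \<in> Mq. C \<otimes>\<^bsub>A Mod N\<^esub> D = D \<otimes>\<^bsub>A Mod N\<^esub> C"
    using hyp N unfolding hyperabelian_def by blast
  define M where "M = {x \<in> carrier A. N #>\<^bsub>A\<^esub> x \<in> Mq}"
  have coset_eq_N: "N #>\<^bsub>A\<^esub> x = N \<longleftrightarrow> x \<in> N" if "x \<in> carrier A" for x
    using that A.coset_join1[OF _ _ N.subgroup_axioms] A.coset_join2[OF _ N.subgroup_axioms] by blast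
  have "M \<lhd> A"
    unfolding M_def using hom_preimage_normal[OF A.is_group Q.is_group N.r_coset_hom_Mod Mq(1)] .
  moreover have N_in_Mq: "N \<in> Mq"
    using subgroup.one_closed[OF normal_imp_subgroup[OF Mq(1)]] by simp
  have "N \<subseteq> M"
  proof
    fix x assume "x \<in> N"
    then have "x \<in> carrier A" using N.subset by blast
    then show "x \<in> M" using N_in_Mq coset_eq_N[of x] \<open>x \<in> N\<close> by (simp add: M_def)
  qed
  moreover have "M \<noteq> N"
  proof
    assume "M = N"
    obtain C where C: "C \<in> Mq" "C \<noteq> N" using Mq(2) N_in_Mq by auto
    then obtain x where "x \<in> carrier A" "C = N #>\<^bsub>A\<^esub> x"
      using subgroup.subset[OF normal_imp_subgroup[OF Mq(1)]] by (auto simp: carrier_FactGroup)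
    then show False using C \<open>M = N\<close> coset_eq_N by (auto simp: M_def)
  qed
  moreover have "x \<otimes>\<^bsub>A\<^esub> y \<otimes>\<^bsub>A\<^esub> inv\<^bsub>A\<^esub> (y \<otimes>\<^bsub>A\<^esub> x) \<in> N"
    if "x \<in> M" "y \<in> M" for x y
  proof -
    have xy: "x \<in> carrier A" "y \<in> carrier A" using that by (auto simp: M_def)
    then have "N #>\<^bsub>A\<^esub> (x \<otimes>\<^bsub>A\<^esub> y) = N #>\<^bsub>A\<^esub> (y \<otimes>\<^bsub>A\<^esub> x)"
      using comm that by (simp add: M_def N.rcos_sum[symmetric])
    then have "N #>\<^bsub>A\<^esub> (x \<otimes>\<^bsub>A\<^esub> y \<otimes>\<^bsub>A\<^esub> inv\<^bsub>A\<^esub> (y \<otimes>\<^bsub>A\<^esub> x)) = N"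
      using xy by (intro A.coset_mult_inv2) (auto simp: N.subset)
    then show ?thesis using coset_eq_N xy by simp
  qed
  ultimately show ?thesis using that by blast
qed

text \<open>Take N maximal among the normal subgroups meeting the image of S trivially. The abelian
  layer above N meets the image, so by simplicity it contains all of it, and then every
  commutator of S maps into N, i.e. is trivial.\<close>

lemma hyperabelian_no_nonabelian_simple_subgroup:
  assumes S: "group S" "simple_grp S" "nonabelian S"
    and hyp: "hyperabelian A" and rho: "rho \<in> hom S A" "inj_on rho (carrier S)"
  shows False
proof -
  interpret A: group A using hyp by (simp add: hyperabelian_def)
  interpret S: group S by (rule S(1))
  interpret rho: group_hom S A rho by (simp add: group_hom_def group_hom_axioms_def rho S A.is_group)
  have rho_eq_one: "x = \<one>\<^bsub>S\<^esub>" if "x \<in> carrier S" "rho x = \<one>\<^bsub>A\<^esub>" for x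
    using rho(2) that S.one_closed by (metis inj_onD rho.hom_one)
  have one_img: "\<one>\<^bsub>A\<^esub> \<in> rho ` carrier S" using rho.hom_one S.one_closed by (metis imageI)
  obtain N where N: "N \<lhd> A" "N \<inter> rho ` carrier S = {\<one>\<^bsub>A\<^esub>}"
    and N_max: "\<And>Z. Z \<lhd> A \<Longrightarrow> Z \<inter> rho ` carrier S = {\<one>\<^bsub>A\<^esub>} \<Longrightarrow> N \<subseteq> Z \<Longrightarrow> Z = N"
    using A.maximal_normal_avoiding[OF one_img] by blast
  obtain x y where xy: "x \<in> carrier S" "y \<in> carrier S" "x \<otimes>\<^bsub>S\<^esub> y \<noteq> y \<otimes>\<^bsub>S\<^esub> x"
    using S(3) by (auto simp: nonabelian_def)
  have "rho x \<notin> N"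
  proof
    assume "rho x \<in> N"
    then have "rho x = \<one>\<^bsub>A\<^esub>" using N(2) xy(1) by auto
    then have "x = \<one>\<^bsub>S\<^esub>" using rho_eq_one xy(1) by blast
    then show False using xy by simp
  qed
  then have "N \<noteq> carrier A" using xy(1) by auto
  then obtain M where M: "M \<lhd> A" "N \<subset> M"
    and comm: "\<And>x y. x \<in> M \<Longrightarrow> y \<in> M \<Longrightarrow> x \<otimes>\<^bsub>A\<^esub> y \<otimes>\<^bsub>A\<^esub> inv\<^bsub>A\<^esub> (y \<otimes>\<^bsub>A\<^esub> x) \<in> N"
    using hyperabelian_abelian_layer[OF hyp N(1)] by blast
  have "M \<inter> rho ` carrier S \<noteq> {\<one>\<^bsub>A\<^esub>}"
    using N_max[OF M(1)] M(2) by auto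
  moreover have "\<one>\<^bsub>A\<^esub> \<in> M" using subgroup.one_closed[OF normal_imp_subgroup[OF M(1)]] .
  ultimately obtain s where s: "s \<in> carrier S" "rho s \<in> M" "rho s \<noteq> \<one>\<^bsub>A\<^esub>"
    using one_img by blast
  have "{t \<in> carrier S. rho t \<in> M} \<lhd> S" using hom_preimage_normal[OF S(1) A.is_group rho(1) M(1)] .
  moreover have "{t \<in> carrier S. rho t \<in> M} \<noteq> {\<one>\<^bsub>S\<^esub>}" using s by force
  ultimately have rho_S_M: "rho t \<in> M" if "t \<in> carrier S" for t
    using S(2) that unfolding simple_grp_def by blast
  define w where "w = x \<otimes>\<^bsub>S\<^esub> y \<otimes>\<^bsub>S\<^esub> inv\<^bsub>S\<^esub> (y \<otimes>\<^bsub>S\<^esub> x)"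
  have w: "w \<in> carrier S" using xy by (simp add: w_def)
  have "rho w \<in> N" using comm[OF rho_S_M rho_S_M] xy by (simp add: w_def)
  then have "rho w = \<one>\<^bsub>A\<^esub>" using N(2) w by auto
  then have "w = \<one>\<^bsub>S\<^esub>" using rho_eq_one w by blast
  then show False using xy by (simp add: w_def S.inv_solve_right')
qed

locale Aut_extension = group G for G :: "'a monoid" (structure) +
  fixes H :: "'a set" and j :: "('a \<Rightarrow> 'a) \<Rightarrow> ('a \<Rightarrow> 'a)"
  assumes subgroup_H: "subgroup H G"
    and simple_H: "simple_grp (G\<lparr>carrier := H\<rparr>)"
    and simple_G: "simple_grp G"
    and j_hom: "j \<in> hom (AutoGroup (G\<lparr>carrier := H\<rparr>)) (AutoGroup G)"
    and j_conj: "\<forall>h \<in> H. j (group_conj (G\<lparr>carrier := H\<rparr>) h) = group_conj G h"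
begin

text \<open>\<open>induced_Out\<close> and \<open>Out_to_quotient\<close> are the maps k and \<open>\<pi>\<close> of the statement,
  acting on cosets.\<close>

abbreviation "HH \<equiv> G\<lparr>carrier := H\<rparr>"
abbreviation "AutH \<equiv> AutoGroup HH"
abbreviation "AutG \<equiv> AutoGroup G"
abbreviation "N \<equiv> {a \<in> carrier AutH. j a \<in> Inn G}"
abbreviation "induced_Out \<equiv> \<lambda>C. Inn G <#>\<^bsub>AutG\<^esub> (j ` C)"
abbreviation "Out_to_quotient \<equiv> \<lambda>C. N <#>\<^bsub>AutH\<^esub> C"

abbreviation "cond_b \<equiv> \<forall>\<theta> \<in> carrier (AutoGroup AutG).
  (\<forall>a \<in> carrier AutH. \<theta> (j a) = j a) \<longrightarrow> \<theta> = \<one>\<^bsub>AutoGroup AutG\<^esub>"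
abbreviation "cond_c \<equiv> \<forall>\<phi>' \<in> hom (AutH Mod N) AutG.
  unique_factorization (Out HH) (Out G) AutG induced_Out (\<lambda>C. \<phi>' (Out_to_quotient C))"
abbreviation "cond_d \<equiv> \<forall>\<phi> \<in> hom AutH AutG.
  Inn HH \<subseteq> kernel AutH AutG \<phi> \<longrightarrow> N \<subseteq> kernel AutH AutG \<phi>"

lemma group_HH: "group HH"
  using subgroup_imp_group[OF subgroup_H] .

lemma group_AutH: "group AutH"
  using group.AutoGroup[OF group_HH] .

lemma group_AutG: "group AutG"
  by (rule AutoGroup)

lemma j_group_hom: "group_hom AutH AutG j"
  by (simp add: group_hom_def group_hom_axioms_def group_AutH group_AutG j_hom)

lemma H_subset: "H \<subseteq> carrier G"
  using subgroup_H by (rule subgroup.subset)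

lemma nontrivial_H:
  obtains h0 where "h0 \<in> H" "h0 \<noteq> \<one>"
  using simple_H subgroup.one_closed[OF subgroup_H] by (auto simp: simple_grp_def)

lemma group_conj_HH_in_AutH: "h \<in> H \<Longrightarrow> group_conj HH h \<in> carrier AutH"
  using group.group_conj_in_AutoGroup[OF group_HH] by simp

lemma j_group_conj: "h \<in> H \<Longrightarrow> j (group_conj HH h) = group_conj G h"
  using j_conj by blast

lemma N_normal: "N \<lhd> AutH"
  using hom_preimage_normal[OF group_AutH group_AutG j_hom Inn_normal] .

lemma Inn_HH_subset_N: "Inn HH \<subseteq> N"
  using H_subset group_conj_HH_in_AutH j_group_conj by (auto simp: Inn_def)

lemma group_Out_G: "group (Out G)"
  unfolding Out_def by (rule normal.factorgroup_is_group[OF Inn_normal])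

lemma Out_proj_hom: "(\<lambda>b. Inn G #>\<^bsub>AutG\<^esub> b) \<in> hom AutG (Out G)"
  unfolding Out_def by (rule normal.r_coset_hom_Mod[OF Inn_normal])

lemma induced_Out_rcos:
  assumes a: "a \<in> carrier AutH"
  shows "induced_Out (Inn HH #>\<^bsub>AutH\<^esub> a) = Inn G #>\<^bsub>AutG\<^esub> j a"
proof -
  interpret j: group_hom AutH AutG j by (rule j_group_hom)
  have "Inn HH \<subseteq> carrier AutH"
    using normal_imp_subgroup[OF group.Inn_normal[OF group_HH]] by (rule subgroup.subset)
  then have "j ` (Inn HH #>\<^bsub>AutH\<^esub> a) = (j ` Inn HH) #>\<^bsub>AutG\<^esub> j a"
    using a by (force simp: r_coset_def)
  moreover have "\<one>\<^bsub>AutG\<^esub> \<in> j ` Inn HH"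
    using subgroup.one_closed[OF normal_imp_subgroup[OF group.Inn_normal[OF group_HH]]] j.hom_one
    by (metis imageI)
  moreover have "j ` Inn HH \<subseteq> Inn G" using Inn_HH_subset_N by blast
  ultimately show ?thesis
    using set_mult_rcos_absorb[OF group_AutG normal_imp_subgroup[OF Inn_normal]] a by simp
qed

lemma Out_to_quotient_rcos:
  "a \<in> carrier AutH \<Longrightarrow> Out_to_quotient (Inn HH #>\<^bsub>AutH\<^esub> a) = N #>\<^bsub>AutH\<^esub> a"
  using set_mult_rcos_absorb[OF group_AutH normal_imp_subgroup[OF N_normal] Inn_HH_subset_N
      subgroup.one_closed[OF normal_imp_subgroup[OF group.Inn_normal[OF group_HH]]]] .

lemma factors_through_induced_Out_iff:
  "(\<forall>C \<in> carrier (Out HH). rho (induced_Out C) = \<phi>' (Out_to_quotient C))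
   \<longleftrightarrow> (\<forall>a \<in> carrier AutH. rho (Inn G #>\<^bsub>AutG\<^esub> j a) = \<phi>' (N #>\<^bsub>AutH\<^esub> a))"
  by (simp add: Out_def carrier_FactGroup induced_Out_rcos Out_to_quotient_rcos)

lemma unique_factorization_Out_iff:
  "unique_factorization (Out HH) (Out G) AutG induced_Out (\<lambda>C. \<phi>' (Out_to_quotient C)) \<longleftrightarrow>
    (\<exists>rho \<in> hom (Out G) AutG. (\<forall>a \<in> carrier AutH. rho (Inn G #>\<^bsub>AutG\<^esub> j a) = \<phi>' (N #>\<^bsub>AutH\<^esub> a)) \<and>
      (\<forall>rho' \<in> hom (Out G) AutG.
         (\<forall>a \<in> carrier AutH. rho' (Inn G #>\<^bsub>AutG\<^esub> j a) = \<phi>' (N #>\<^bsub>AutH\<^esub> a)) \<longrightarrow>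
         (\<forall>b \<in> carrier AutG. rho' (Inn G #>\<^bsub>AutG\<^esub> b) = rho (Inn G #>\<^bsub>AutG\<^esub> b))))"
  unfolding unique_factorization_def factors_through_induced_Out_iff
  by (simp add: Out_def carrier_FactGroup)

lemma AutG_hom_kills_Inn_G:
  assumes "group K" "psi \<in> hom AutG K" "\<forall>h \<in> H. psi (group_conj G h) = \<one>\<^bsub>K\<^esub>"
    and "c \<in> Inn G"
  shows "psi c = \<one>\<^bsub>K\<^esub>"
proof -
  obtain h0 where "h0 \<in> H" "h0 \<noteq> \<one>" by (rule nontrivial_H)
  moreover obtain u where "u \<in> carrier G" "c = group_conj G u" using assms(4) by (auto simp: Inn_def)
  ultimately show ?thesis
    using AutoGroup_hom_kills_Inn[OF simple_G assms(1,2)] H_subset assms(3) by blast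
qed

lemma kills_group_conj_G_if_factor_kills_Inn_HH:
  assumes "\<And>x. x \<in> carrier AutH \<Longrightarrow> psi (j x) = \<phi> x" "\<And>c. c \<in> Inn HH \<Longrightarrow> \<phi> c = \<one>\<^bsub>K\<^esub>"
  shows "\<forall>h \<in> H. psi (group_conj G h) = \<one>\<^bsub>K\<^esub>"
proof
  fix h assume h: "h \<in> H"
  have "group_conj HH h \<in> Inn HH" using h by (simp add: Inn_def)
  then show "psi (group_conj G h) = \<one>\<^bsub>K\<^esub>"
    using assms(1)[OF group_conj_HH_in_AutH[OF h]] assms(2) j_group_conj[OF h] by simp
qed

lemma Out_G_lift:
  assumes "group K" "psi \<in> hom AutG K" "\<forall>h \<in> H. psi (group_conj G h) = \<one>\<^bsub>K\<^esub>"
  shows "(\<lambda>C. the_elem (psi ` C)) \<in> hom (Out G) K"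
    and "\<And>b. b \<in> carrier AutG \<Longrightarrow> the_elem (psi ` (Inn G #>\<^bsub>AutG\<^esub> b)) = psi b"
  using FactGroup_lift[OF group_AutG assms(1) Inn_normal assms(2) AutG_hom_kills_Inn_G[OF assms]]
  unfolding Out_def by auto

lemma localization_imp_cond_b:
  assumes "localization AutH AutG j"
  shows cond_b
  using group.localization_AutoGroup_eq_one[OF group_AutG assms] by blast

lemma localization_imp_cond_d:
  assumes loc: "localization AutH AutG j"
  shows cond_d
proof (intro ballI impI subsetI)
  fix \<phi> a assume \<phi>: "\<phi> \<in> hom AutH AutG" and ker: "Inn HH \<subseteq> kernel AutH AutG \<phi>" and a: "a \<in> N"
  obtain psi where psi: "psi \<in> hom AutG AutG" and psi_j: "\<And>x. x \<in> carrier AutH \<Longrightarrow> psi (j x) = \<phi> x"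
    using localization_extends[OF loc \<phi>] by blast
  have "\<forall>h \<in> H. psi (group_conj G h) = \<one>\<^bsub>AutG\<^esub>"
    using kills_group_conj_G_if_factor_kills_Inn_HH[where psi = psi and \<phi> = \<phi>, OF psi_j] ker by (auto simp: kernel_def)
  then have "psi (j a) = \<one>\<^bsub>AutG\<^esub>" using AutG_hom_kills_Inn_G[OF group_AutG psi] a by blast
  then have "\<phi> a = \<one>\<^bsub>AutG\<^esub>" using psi_j a by simp
  then show "a \<in> kernel AutH AutG \<phi>" using a by (simp add: kernel_def)
qed

lemma localization_imp_cond_c:
  assumes loc: "localization AutH AutG j"
  shows cond_c
proof
  fix \<phi>' assume \<phi>': "\<phi>' \<in> hom (AutH Mod N) AutG"
  interpret \<phi>': group_hom "AutH Mod N" AutG \<phi>'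
    using \<phi>' by (simp add: group_hom_def group_hom_axioms_def normal.factorgroup_is_group[OF N_normal]
      group_AutG)
  define \<phi> where "\<phi> = (\<lambda>a. \<phi>' (N #>\<^bsub>AutH\<^esub> a))"
  have \<phi>: "\<phi> \<in> hom AutH AutG"
    unfolding \<phi>_def using normal.r_coset_hom_Mod[OF N_normal] \<phi>'
    by (rule Group.hom_compose[unfolded comp_def])
  obtain psi where psi: "psi \<in> hom AutG AutG" and psi_j: "\<And>x. x \<in> carrier AutH \<Longrightarrow> psi (j x) = \<phi> x"
    using localization_extends[OF loc \<phi>] by blast
  have \<phi>_N: "\<phi> a = \<one>\<^bsub>AutG\<^esub>" if "a \<in> N" for a
    using group.coset_join2[OF group_AutH _ normal_imp_subgroup[OF N_normal] that] that \<phi>'.hom_one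
    by (simp add: \<phi>_def)
  have kills: "\<forall>h \<in> H. psi (group_conj G h) = \<one>\<^bsub>AutG\<^esub>"
    using kills_group_conj_G_if_factor_kills_Inn_HH[where psi = psi and \<phi> = \<phi>, OF psi_j] \<phi>_N Inn_HH_subset_N by blast
  note rho = Out_G_lift[OF group_AutG psi kills]
  show "unique_factorization (Out HH) (Out G) AutG induced_Out (\<lambda>C. \<phi>' (Out_to_quotient C))"
    unfolding unique_factorization_Out_iff
  proof (intro bexI conjI ballI impI)
    show "the_elem (psi ` (Inn G #>\<^bsub>AutG\<^esub> j a)) = \<phi>' (N #>\<^bsub>AutH\<^esub> a)" if "a \<in> carrier AutH" for a
      using that rho(2) psi_j hom_in_carrier[OF j_hom] by (simp add: \<phi>_def)
    fix rho' b assume rho': "rho' \<in> hom (Out G) AutG"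
      and rho'_j: "\<forall>a \<in> carrier AutH. rho' (Inn G #>\<^bsub>AutG\<^esub> j a) = \<phi>' (N #>\<^bsub>AutH\<^esub> a)"
      and b: "b \<in> carrier AutG"
    have "(\<lambda>b. rho' (Inn G #>\<^bsub>AutG\<^esub> b)) \<in> hom AutG AutG"
      using Out_proj_hom rho' by (rule Group.hom_compose[unfolded comp_def])
    moreover have "rho' (Inn G #>\<^bsub>AutG\<^esub> j x) = psi (j x)" if "x \<in> carrier AutH" for x
      using that rho'_j psi_j by (simp add: \<phi>_def)
    ultimately have "rho' (Inn G #>\<^bsub>AutG\<^esub> b) = psi b"
      using localization_hom_eqI[OF loc _ psi _ b] by blast
    then show "rho' (Inn G #>\<^bsub>AutG\<^esub> b) = the_elem (psi ` (Inn G #>\<^bsub>AutG\<^esub> b))"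
      using rho(2)[OF b] by simp
  qed (rule rho(1))
qed

lemma cond_c_cond_d_factorization:
  assumes c: cond_c and d: cond_d and \<phi>: "\<phi> \<in> hom AutH AutG"
    and kills: "\<forall>h \<in> H. \<phi> (group_conj HH h) = \<one>\<^bsub>AutG\<^esub>"
  shows "unique_factorization AutH AutG AutG j \<phi>"
proof -
  have Inn_kills: "\<phi> c = \<one>\<^bsub>AutG\<^esub>" if "c \<in> Inn HH" for c
    using that kills by (auto simp: Inn_def)
  then have "Inn HH \<subseteq> kernel AutH AutG \<phi>"
    using normal_imp_subgroup[OF group.Inn_normal[OF group_HH]] subgroup.subset
    by (fastforce simp: kernel_def)
  then have "\<phi> a = \<one>\<^bsub>AutG\<^esub>" if "a \<in> N" for a
    using d \<phi> that by (auto simp: kernel_def)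
  note \<phi>' = FactGroup_lift[OF group_AutH group_AutG N_normal \<phi> this]
  obtain rho where rho: "rho \<in> hom (Out G) AutG"
    and rho_j: "\<forall>a \<in> carrier AutH. rho (Inn G #>\<^bsub>AutG\<^esub> j a) = the_elem (\<phi> ` (N #>\<^bsub>AutH\<^esub> a))"
    and rho_uniq: "\<forall>rho' \<in> hom (Out G) AutG.
       (\<forall>a \<in> carrier AutH. rho' (Inn G #>\<^bsub>AutG\<^esub> j a) = the_elem (\<phi> ` (N #>\<^bsub>AutH\<^esub> a))) \<longrightarrow>
       (\<forall>b \<in> carrier AutG. rho' (Inn G #>\<^bsub>AutG\<^esub> b) = rho (Inn G #>\<^bsub>AutG\<^esub> b))"
    using c \<phi>'(1) unfolding unique_factorization_Out_iff by blast
  define psi where "psi = (\<lambda>b. rho (Inn G #>\<^bsub>AutG\<^esub> b))"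
  have psi: "psi \<in> hom AutG AutG"
    unfolding psi_def using Out_proj_hom rho by (rule Group.hom_compose[unfolded comp_def])
  show ?thesis
    unfolding unique_factorization_def
  proof (intro bexI[where x = psi] conjI ballI impI)
    show "psi (j a) = \<phi> a" if "a \<in> carrier AutH" for a
      using rho_j \<phi>'(2) that by (simp add: psi_def)
    fix \<sigma> b assume \<sigma>: "\<sigma> \<in> hom AutG AutG" and \<sigma>_j: "\<forall>x \<in> carrier AutH. \<sigma> (j x) = \<phi> x"
      and b: "b \<in> carrier AutG"
    have "\<forall>h \<in> H. \<sigma> (group_conj G h) = \<one>\<^bsub>AutG\<^esub>"
      using kills_group_conj_G_if_factor_kills_Inn_HH[where psi = \<sigma> and \<phi> = \<phi>] \<sigma>_j Inn_kills by blast
    note \<sigma>' = Out_G_lift[OF group_AutG \<sigma> this]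
    have "\<forall>a \<in> carrier AutH. the_elem (\<sigma> ` (Inn G #>\<^bsub>AutG\<^esub> j a)) = the_elem (\<phi> ` (N #>\<^bsub>AutH\<^esub> a))"
      using \<sigma>'(2) \<sigma>_j \<phi>'(2) hom_in_carrier[OF j_hom] by simp
    then have "the_elem (\<sigma> ` (Inn G #>\<^bsub>AutG\<^esub> b)) = rho (Inn G #>\<^bsub>AutG\<^esub> b)"
      by (intro rho_uniq[rule_format, OF \<sigma>'(1)] b) simp
    then show "\<sigma> b = psi b" using \<sigma>'(2)[OF b] by (simp add: psi_def)
  qed (rule psi)
qed

lemma conj_image_in_Inn_G:
  assumes "nonabelian HH" "hyperabelian (Out G)" and \<phi>: "\<phi> \<in> hom AutH AutG" and h: "h \<in> H"
  shows "\<phi> (group_conj HH h) \<in> Inn G"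
proof -
  define rho where "rho = (\<lambda>h. Inn G #>\<^bsub>AutG\<^esub> \<phi> (group_conj HH h))"
  have "rho \<in> hom HH (Out G)"
    unfolding rho_def
    using Group.hom_compose[OF Group.hom_compose[OF group.group_conj_hom[OF group_HH] \<phi>] Out_proj_hom]
    by (simp add: comp_def)
  moreover have "\<not> inj_on rho (carrier HH)"
    using hyperabelian_no_nonabelian_simple_subgroup[OF group_HH simple_H assms(1,2) \<open>rho \<in> _\<close>] by blast
  ultimately have "rho h = \<one>\<^bsub>Out G\<^esub>"
    using group.simple_hom_trivial_or_inj[OF group_HH simple_H group_Out_G] h by auto
  then have "Inn G #>\<^bsub>AutG\<^esub> \<phi> (group_conj HH h) = Inn G" by (simp add: rho_def Out_def)
  then show ?thesis
    using group.coset_join1[OF group_AutG _ _ normal_imp_subgroup[OF Inn_normal]]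
      hom_in_carrier[OF \<phi> group_conj_HH_in_AutH[OF h]] by blast
qed

lemma inner_action_by_automorphism:
  assumes "nonabelian G" and loc: "localization HH G (\<lambda>x. x)" and "cohopfian G"
    and \<phi>: "\<phi> \<in> hom AutH AutG" and inn: "\<forall>h \<in> H. \<phi> (group_conj HH h) \<in> Inn G"
    and h1: "h1 \<in> H" "\<phi> (group_conj HH h1) \<noteq> \<one>\<^bsub>AutG\<^esub>"
  obtains t where "t \<in> carrier AutG" "\<And>h. h \<in> H \<Longrightarrow> \<phi> (group_conj HH h) = group_conj G (t h)"
proof -
  define f where "f = (\<lambda>h. inv_into (carrier G) (group_conj G) (\<phi> (group_conj HH h)))"
  have "(\<lambda>h. \<phi> (group_conj HH h)) \<in> hom HH AutG"
    using Group.hom_compose[OF group.group_conj_hom[OF group_HH] \<phi>] by (simp add: comp_def)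
  then have f: "f \<in> hom HH G"
    unfolding f_def using inn
    by (intro hom_inv_into_lift[OF group_HH is_group group_AutG group_conj_hom
          group_conj_inj[OF simple_G assms(1)]]) (auto simp: Inn_def)
  have conj_f: "group_conj G (f h) = \<phi> (group_conj HH h)" if "h \<in> H" for h
    using inn that by (auto simp: f_def Inn_def intro: f_inv_into_f)
  obtain g where g: "g \<in> hom G G" and g_f: "\<And>h. h \<in> H \<Longrightarrow> g h = f h"
    using localization_extends[OF loc f] by auto
  have "g h1 \<noteq> \<one>" using conj_f[OF h1(1)] g_f[OF h1(1)] h1(2) group_conj_one by auto
  then have "inj_on g (carrier G)"
    using simple_hom_trivial_or_inj[OF simple_G is_group g] h1(1) H_subset by blast
  then have "restrict g (carrier G) \<in> carrier AutG"
    by (rule cohopfian_inj_hom_in_AutoGroup[OF assms(3) g])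
  moreover have "\<phi> (group_conj HH h) = group_conj G (restrict g (carrier G) h)" if "h \<in> H" for h
    using conj_f g_f H_subset that by auto
  ultimately show ?thesis by (rule that)
qed

lemma AutH_hom_apply_intertwines:
  assumes "nonabelian G" and chi: "chi \<in> hom AutH AutG" and t: "t \<in> carrier AutG"
    and chi_t: "\<And>h. h \<in> H \<Longrightarrow> chi (group_conj HH h) = group_conj G (t h)"
    and a: "a \<in> carrier AutH" and h: "h \<in> H"
  shows "chi a (t h) = t (a h)"
proof -
  interpret chi: group_hom AutH AutG chi
    by (simp add: group_hom_def group_hom_axioms_def group_AutH group_AutG chi)
  have h_G: "h \<in> carrier G" and ah: "a h \<in> H"
    using h H_subset group.AutoGroup_apply_closed[OF group_HH a] by auto
  have "group_conj G (chi a (t h))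
      = chi a \<otimes>\<^bsub>AutG\<^esub> chi (group_conj HH h) \<otimes>\<^bsub>AutG\<^esub> inv\<^bsub>AutG\<^esub> chi a"
    using AutoGroup_conj_group_conj[OF _ AutoGroup_apply_closed[OF t h_G]] a chi_t[OF h] by simp
  also have "\<dots> = chi (a \<otimes>\<^bsub>AutH\<^esub> group_conj HH h \<otimes>\<^bsub>AutH\<^esub> inv\<^bsub>AutH\<^esub> a)"
    using a group_conj_HH_in_AutH[OF h] by simp
  also have "\<dots> = group_conj G (t (a h))"
    using group.AutoGroup_conj_group_conj[OF group_HH a] h chi_t[OF ah] by simp
  moreover have "chi a (t h) \<in> carrier G" "t (a h) \<in> carrier G"
    using AutoGroup_apply_closed[OF t] AutoGroup_apply_closed[OF hom_in_carrier[OF chi a]] h_G ah H_subset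
    by auto
  ultimately show ?thesis
    using group_conj_inj[OF simple_G assms(1)] by (auto dest: inj_onD)
qed

lemma AutH_homs_eqI:
  assumes "nonabelian G" and loc: "localization HH G (\<lambda>x. x)"
    and psi: "psi \<in> hom AutH AutG" and \<phi>: "\<phi> \<in> hom AutH AutG" and t: "t \<in> carrier AutG"
    and psi_t: "\<And>h. h \<in> H \<Longrightarrow> psi (group_conj HH h) = group_conj G (t h)"
    and \<phi>_t: "\<And>h. h \<in> H \<Longrightarrow> \<phi> (group_conj HH h) = group_conj G (t h)"
    and a: "a \<in> carrier AutH"
  shows "psi a = \<phi> a"
proof -
  have psi_a: "psi a \<in> carrier AutG" and \<phi>_a: "\<phi> a \<in> carrier AutG"
    using hom_in_carrier[OF psi a] hom_in_carrier[OF \<phi> a] .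
  have homs: "(\<lambda>x. psi a (t x)) \<in> hom G G" "(\<lambda>x. \<phi> a (t x)) \<in> hom G G"
    using Group.hom_compose[OF AutoGroup_memD(1)[OF t] AutoGroup_memD(1)[OF psi_a]]
      Group.hom_compose[OF AutoGroup_memD(1)[OF t] AutoGroup_memD(1)[OF \<phi>_a]]
    by (simp_all add: comp_def)
  have "psi a (t h) = \<phi> a (t h)" if "h \<in> H" for h
    using AutH_hom_apply_intertwines[OF assms(1) psi t psi_t a that]
      AutH_hom_apply_intertwines[OF assms(1) \<phi> t \<phi>_t a that] by simp
  then have "psi a (t x) = \<phi> a (t x)" if "x \<in> carrier G" for x
    using localization_hom_eqI[OF loc homs _ that] by simp
  then show ?thesis
    using psi_a \<phi>_a AutoGroup_apply_inv[OF t] AutoGroup_apply_closed[OF group_AutG[THEN group.inv_closed, OF t]]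
    by (intro AutoGroup_eqI) metis+
qed

lemma cond_b_imp_eq_group_conj:
  assumes "nonabelian G" "cohopfian AutG" and b: cond_b and t: "t \<in> carrier AutG"
    and \<sigma>: "\<sigma> \<in> hom AutG AutG"
    and \<sigma>_j: "\<And>a. a \<in> carrier AutH \<Longrightarrow> \<sigma> (j a) = group_conj AutG t (j a)"
    and y: "y \<in> carrier AutG"
  shows "\<sigma> y = group_conj AutG t y"
proof -
  interpret A: group AutG by (rule group_AutG)
  have conj_inv_t: "group_conj AutG (inv\<^bsub>AutG\<^esub> t) (group_conj AutG t b) = b"
    "group_conj AutG t (group_conj AutG (inv\<^bsub>AutG\<^esub> t) b) = b" if "b \<in> carrier AutG" for b
    using A.group_conj_inv_cancel[OF t that] by simp_all
  define \<theta> where "\<theta> = (\<lambda>b. group_conj AutG (inv\<^bsub>AutG\<^esub> t) (\<sigma> b))"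
  have \<theta>: "\<theta> \<in> hom AutG AutG"
    unfolding \<theta>_def using \<sigma> A.AutoGroup_memD(1)[OF A.group_conj_in_AutoGroup[of "inv\<^bsub>AutG\<^esub> t"]] t
    by (simp add: Group.hom_compose[unfolded comp_def])
  have \<theta>_j: "\<theta> (j a) = j a" if "a \<in> carrier AutH" for a
    using conj_inv_t \<sigma>_j[OF that] hom_in_carrier[OF j_hom that] by (simp add: \<theta>_def)
  obtain h0 where h0: "h0 \<in> H" "h0 \<noteq> \<one>" by (rule nontrivial_H)
  then have "\<theta> (group_conj G h0) = group_conj G h0"
    using \<theta>_j[OF group_conj_HH_in_AutH] j_group_conj by metis
  moreover have "group_conj G h0 \<noteq> \<one>\<^bsub>AutG\<^esub>"
    using group_conj_inj[OF simple_G assms(1)] h0 H_subset group_conj_one by (auto simp: inj_on_def)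
  ultimately have "inj_on (\<theta> \<circ> group_conj G) (carrier G)"
    using simple_hom_trivial_or_inj[OF simple_G group_AutG Group.hom_compose[OF group_conj_hom \<theta>]]
      h0 H_subset by fastforce
  then have "restrict \<theta> (carrier AutG) \<in> carrier (AutoGroup AutG)"
    using A.cohopfian_inj_hom_in_AutoGroup[OF assms(2) \<theta>]
      AutoGroup_hom_inj_if_inj_on_Inn[OF group_AutG \<theta>] by blast
  then have "restrict \<theta> (carrier AutG) = \<one>\<^bsub>AutoGroup AutG\<^esub>"
    using b \<theta>_j hom_in_carrier[OF j_hom] by simp
  then have "\<theta> y = y" using y by (metis A.AutoGroup_one restrict_apply')
  moreover have "\<sigma> y = group_conj AutG t (\<theta> y)"
    using conj_inv_t(2)[OF hom_in_carrier[OF \<sigma> y]] by (simp add: \<theta>_def)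
  ultimately show ?thesis by simp
qed

lemma factorization_if_nontrivial_on_Inn_HH:
  assumes "nonabelian HH" "nonabelian G" "localization HH G (\<lambda>x. x)"
    and "cohopfian G" "cohopfian AutG" "hyperabelian (Out G)" and b: cond_b
    and \<phi>: "\<phi> \<in> hom AutH AutG" and h1: "h1 \<in> H" "\<phi> (group_conj HH h1) \<noteq> \<one>\<^bsub>AutG\<^esub>"
  shows "unique_factorization AutH AutG AutG j \<phi>"
proof -
  interpret A: group AutG by (rule group_AutG)
  have "\<forall>h \<in> H. \<phi> (group_conj HH h) \<in> Inn G"
    using conj_image_in_Inn_G[OF assms(1,6) \<phi>] by blast
  then obtain t where t: "t \<in> carrier AutG"
    and \<phi>_t: "\<And>h. h \<in> H \<Longrightarrow> \<phi> (group_conj HH h) = group_conj G (t h)"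
    using inner_action_by_automorphism[OF assms(2,3,4) \<phi> _ h1] by blast
  have conj_t: "group_conj AutG t \<in> hom AutG AutG"
    using A.AutoGroup_memD(1)[OF A.group_conj_in_AutoGroup[OF t]] .
  have conj_t_j_hom: "(\<lambda>a. group_conj AutG t (j a)) \<in> hom AutH AutG"
    using Group.hom_compose[OF j_hom conj_t] by (simp add: comp_def)
  have conj_t_j_H: "group_conj AutG t (j (group_conj HH h)) = group_conj G (t h)" if h: "h \<in> H" for h
  proof -
    have h_G: "h \<in> carrier G" using h H_subset by blast
    show ?thesis
      using AutoGroup_conj_group_conj[OF t h_G] j_group_conj[OF h]
      by (simp add: A.group_conj_apply group_conj_in_AutoGroup[OF h_G])
  qed
  have conj_t_j: "group_conj AutG t (j a) = \<phi> a" if "a \<in> carrier AutH" for a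
    using AutH_homs_eqI[OF assms(2,3) conj_t_j_hom \<phi> t conj_t_j_H \<phi>_t that] .
  show ?thesis
    unfolding unique_factorization_def
  proof (intro bexI[where x = "group_conj AutG t"] conjI ballI impI)
    fix \<sigma> y assume \<sigma>: "\<sigma> \<in> hom AutG AutG" and \<sigma>_j: "\<forall>a \<in> carrier AutH. \<sigma> (j a) = \<phi> a"
      and y: "y \<in> carrier AutG"
    show "\<sigma> y = group_conj AutG t y"
      using cond_b_imp_eq_group_conj[OF assms(2,5) b t \<sigma> _ y] \<sigma>_j conj_t_j by simp
  qed (use conj_t conj_t_j in auto)
qed

lemma conds_imp_localization:
  assumes "nonabelian HH" "nonabelian G" "localization HH G (\<lambda>x. x)"
    and "cohopfian G" "cohopfian AutG" "hyperabelian (Out G)"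
    and b: cond_b and c: cond_c and d: cond_d
  shows "localization AutH AutG j"
  unfolding localization_def
proof (intro conjI ballI)
  fix \<phi> assume \<phi>: "\<phi> \<in> hom AutH AutG"
  show "unique_factorization AutH AutG AutG j \<phi>"
  proof (cases "\<forall>h \<in> H. \<phi> (group_conj HH h) = \<one>\<^bsub>AutG\<^esub>")
    case True
    then show ?thesis by (rule cond_c_cond_d_factorization[OF c d \<phi>])
  next
    case False
    then obtain h1 where "h1 \<in> H" "\<phi> (group_conj HH h1) \<noteq> \<one>\<^bsub>AutG\<^esub>" by blast
    then show ?thesis by (rule factorization_if_nontrivial_on_Inn_HH[OF assms(1-7) \<phi>])
  qed
qed (rule j_hom)

lemma complete_imp_cond_b:
  assumes "nonabelian G" "localization HH G (\<lambda>x. x)" "complete_group AutG"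
  shows cond_b
proof (intro ballI impI)
  interpret A: group AutG by (rule group_AutG)
  fix \<theta> assume \<theta>: "\<theta> \<in> carrier (AutoGroup AutG)" and \<theta>_j: "\<forall>a \<in> carrier AutH. \<theta> (j a) = j a"
  obtain \<beta> where \<beta>: "\<beta> \<in> carrier AutG" and \<theta>_\<beta>: "\<theta> = group_conj AutG \<beta>"
    using assms(3) \<theta> by (auto simp: complete_group_def Inn_def)
  have "\<beta> h = h" if h: "h \<in> H" for h
  proof -
    have h_G: "h \<in> carrier G" using h H_subset by blast
    have "group_conj G (\<beta> h) = \<theta> (group_conj G h)"
      using AutoGroup_conj_group_conj[OF \<beta> h_G]
      by (simp add: \<theta>_\<beta> A.group_conj_apply group_conj_in_AutoGroup[OF h_G])
    also have "\<dots> = group_conj G h"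
      using \<theta>_j group_conj_HH_in_AutH[OF h] j_group_conj[OF h] by metis
    finally show ?thesis
      using group_conj_inj[OF simple_G assms(1)] AutoGroup_apply_closed[OF \<beta> h_G] h_G
      by (auto dest: inj_onD)
  qed
  then have "\<beta> = \<one>\<^bsub>AutG\<^esub>" using localization_AutoGroup_eq_one[OF assms(2) \<beta>] by simp
  then show "\<theta> = \<one>\<^bsub>AutoGroup AutG\<^esub>" by (simp add: \<theta>_\<beta> A.group_conj_one)
qed

end

theorem theorem3p5:
  fixes G :: "'a monoid" and H :: "'a set"
    and j :: "('a \<Rightarrow> 'a) \<Rightarrow> ('a \<Rightarrow> 'a)"
  assumes grpG: "group G"
    and subH: "subgroup H G"
    and simpH: "simple_grp (G\<lparr>carrier := H\<rparr>)" and nabH: "nonabelian (G\<lparr>carrier := H\<rparr>)"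
    and simpG: "simple_grp G" and nabG: "nonabelian G"
    and locH: "localization (G\<lparr>carrier := H\<rparr>) G (\<lambda>x. x)"
    and chG: "cohopfian G" and chAutG: "cohopfian (AutoGroup G)"
    and complAutH: "complete_group (AutoGroup (G\<lparr>carrier := H\<rparr>))"
    and hypOut: "hyperabelian (Out G)"
    and jhom: "j \<in> hom (AutoGroup (G\<lparr>carrier := H\<rparr>)) (AutoGroup G)"
    and jinj: "inj_on j (carrier (AutoGroup (G\<lparr>carrier := H\<rparr>)))"
    and jconj: "\<forall>h \<in> H. j (group_conj (G\<lparr>carrier := H\<rparr>) h) = group_conj G h"
  shows
   "let HH = G\<lparr>carrier := H\<rparr>;
        AutH = AutoGroup HH;
        AutG = AutoGroup G;
        N = {a \<in> carrier AutH. j a \<in> Inn G};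
        k = (\<lambda>C. Inn G <#>\<^bsub>AutG\<^esub> (j ` C));
        \<pi> = (\<lambda>C. N <#>\<^bsub>AutH\<^esub> C);
        cond_b = (\<forall>\<theta> \<in> carrier (AutoGroup AutG).
                    (\<forall>a \<in> carrier AutH. \<theta> (j a) = j a) \<longrightarrow> \<theta> = \<one>\<^bsub>AutoGroup AutG\<^esub>);
        cond_c = (\<forall>\<phi>' \<in> hom (AutH Mod N) AutG.
                    unique_factorization (Out HH) (Out G) AutG k (\<lambda>C. \<phi>' (\<pi> C)));
        cond_d = (\<forall>\<phi> \<in> hom AutH AutG.
                    Inn HH \<subseteq> kernel AutH AutG \<phi> \<longrightarrow> N \<subseteq> kernel AutH AutG \<phi>)
    in (localization AutH AutG j \<longleftrightarrow> cond_b \<and> cond_c \<and> cond_d)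
       \<and> (complete_group AutG \<longrightarrow> (localization AutH AutG j \<longleftrightarrow> cond_c \<and> cond_d))"
proof -
  interpret Aut_extension G H j
    by (rule Aut_extension.intro[OF grpG Aut_extension_axioms.intro[OF subH simpH simpG jhom jconj]])
  have "localization AutH AutG j \<longleftrightarrow> cond_b \<and> cond_c \<and> cond_d"
    using localization_imp_cond_b localization_imp_cond_c localization_imp_cond_d
      conds_imp_localization[OF nabH nabG locH chG chAutG hypOut] by blast
  moreover have "complete_group AutG \<Longrightarrow> cond_b"
    by (rule complete_imp_cond_b[OF nabG locH])
  ultimately show ?thesis unfolding Let_def by blast
qed

end
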